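(* Let $k \geq 3$ and $n > 3k+1$ be integers such that $n$ is $k$-admissible, let $(V,\mathcal{A})$ be a non-reducible partial $k$-star design of order $n$ with at most $u(n,k)$ stars, and let $L$ be the leftover of $(V,\mathcal{A})$. Then (i) at most one vertex of $L$ has degree at most $k$; (ii) if two adjacent vertices of $L$ have degree less than $2k$, then every other vertex of $L$ has degree at least $2k$.
   Context: A $k$-star is a copy of $K_{1,k}$; its vertex of degree $k$ is the centre and the others are leaves. A partial $k$-star design of order $n$ is a pair $(V,\mathcal{A})$ where $V$ is a set of $n$ vertices and $\mathcal{A}$ is a set of edge-disjoint $k$-stars that are subgraphs of the complete graph $K_V$. The leftover of $(V,\mathcal{A})$ is the graph on $V$ whose edges are the edges of $K_V$ lying in no star of $\mathcal{A}$. A positive integer $n$ is $k$-admissible if $\binom{n}{2}\equiv 0 \pmod{k}$. Here \[u(n,k)= \begin{cases} 2 \lfloor \frac{n-2}{k} \rfloor-1 & \text{if $n \not \equiv 1\pmod{k}$},\\ \frac{2(n-1)}{k} - 2 & \text{if $n \equiv 1\pmod{k}$.} \end{cases} \] A partial $k$-star design $(V,\mathcal{A})$ of order $n$ is reducible if $n \equiv 1 \pmod{k}$, $|\mathcal{A}|=u(n,k)$, and there is a vertex which is the centre of at least one star in $\mathcal{A}$ and is not a leaf of any star in $\mathcal{A}$; otherwise it is non-reducible. *)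

theory Defs
  imports Main
begin

text \<open>Graphs on a vertex set are represented by their edge sets; an edge is a
  2-element set of vertices. A k-star is represented by a pair (centre, set of leaves).\<close>

definition complete_edges :: "'a set \<Rightarrow> 'a set set" where
  "complete_edges V = {{x, y} | x y. x \<in> V \<and> y \<in> V \<and> x \<noteq> y}"

definition star_edges :: "'a \<times> 'a set \<Rightarrow> 'a set set" where
  "star_edges s = {{fst s, y} | y. y \<in> snd s}"

definition is_k_star :: "nat \<Rightarrow> 'a set \<Rightarrow> 'a \<times> 'a set \<Rightarrow> bool" where
  "is_k_star k V s \<longleftrightarrow> fst s \<in> V \<and> snd s \<subseteq> V \<and> fst s \<notin> snd s \<and> finite (snd s) \<and> card (snd s) = k"

definition partial_star_design :: "nat \<Rightarrow> nat \<Rightarrow> 'a set \<Rightarrow> ('a \<times> 'a set) set \<Rightarrow> bool" where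
  "partial_star_design k n V A \<longleftrightarrow>
     finite V \<and> card V = n \<and> (\<forall>s\<in>A. is_k_star k V s) \<and>
     (\<forall>s\<in>A. \<forall>t\<in>A. s \<noteq> t \<longrightarrow> star_edges s \<inter> star_edges t = {})"

definition leftover :: "'a set \<Rightarrow> ('a \<times> 'a set) set \<Rightarrow> 'a set set" where
  "leftover V A = complete_edges V - (\<Union>s\<in>A. star_edges s)"

definition degree :: "'a set \<Rightarrow> 'a set set \<Rightarrow> 'a \<Rightarrow> nat" where
  "degree V E x = card {y \<in> V. y \<noteq> x \<and> {x, y} \<in> E}"

definition admissible :: "nat \<Rightarrow> nat \<Rightarrow> bool" where
  "admissible k n \<longleftrightarrow> (n choose 2) mod k = 0"

definition u_bound :: "nat \<Rightarrow> nat \<Rightarrow> int" where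
  "u_bound n k = (if n mod k \<noteq> 1 mod k then 2 * ((int n - 2) div int k) - 1
                  else 2 * (int n - 1) div int k - 2)"

definition reducible :: "nat \<Rightarrow> nat \<Rightarrow> 'a set \<Rightarrow> ('a \<times> 'a set) set \<Rightarrow> bool" where
  "reducible k n V A \<longleftrightarrow> n mod k = 1 mod k \<and> int (card A) = u_bound n k \<and>
     (\<exists>v\<in>V. (\<exists>S. (v, S) \<in> A) \<and> \<not> (\<exists>s\<in>A. v \<in> snd s))"

end

theory Submission
  imports Defs
begin

(* Write n - 1 = k q + r with 0 <= r < k. Admissibility rules out r = 1, and u(n,k) is 2q - 1
   for r >= 2 and 2q - 2 for r = 0. If x is the centre of c(x) stars and a leaf of l(x) stars,
   then deg_L(x) + k c(x) + l(x) = n - 1. For a vertex set W and a vertex w, the sum of c over W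
   plus l(w) counts a star of A twice only if it is centred in W with leaf w; each pair of
   vertices carries at most one such star, and none if the pair is an edge of L. Summing these
   bounds over w in W and comparing with the lower bounds 2c + l >= 2q - 2 + min(r,2) when
   deg_L <= k, and 3c + l >= 3q - 6 + min(r+1,3) when deg_L < 2k, contradicts |A| <= u(n,k),
   except in part (i) with r = 0 and |A| = u(n,k); there some vertex has c = q - 1 > 0 and
   l = 0, so the design is reducible. *)

lemma weighted_lower_bound:
  fixes c l m p s k :: nat
  assumes "m \<le> k" and "k * p + s \<le> k * c + l"
  shows "m * p + min s m \<le> m * c + l"
proof (cases "p < c")
  case True
  then have "m * (p + 1) \<le> m * c" by (intro mult_le_mono2) simp
  then show ?thesis by (simp add: algebra_simps)
next
  case False
  then have "m * p = m * (p - c) + m * c" and "k * p = k * (p - c) + k * c"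
    by (simp_all add: algebra_simps flip: add_mult_distrib2)
  moreover have "m * (p - c) \<le> k * (p - c)" using assms(1) by simp
  ultimately show ?thesis using assms(2) by linarith
qed

lemma weighted_lower_bound_eq:
  fixes c l m p k :: nat
  assumes "0 < m" "m < k" and "k * p \<le> k * c + l" and "m * c + l \<le> m * p"
  shows "c = p \<and> l = 0"
proof -
  have "\<not> p < c"
  proof
    assume "p < c"
    then have "m * p < m * c" using assms(1) by simp
    then show False using assms(4) by linarith
  qed
  moreover have "\<not> c < p"
  proof
    assume "c < p"
    then have "m * p = m * (p - c) + m * c" and "k * p = k * (p - c) + k * c"
      by (simp_all flip: add_mult_distrib2)
    moreover have "m * (p - c) < k * (p - c)"
      using assms(2) \<open>c < p\<close> by (intro mult_strict_right_mono) simp_all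
    ultimately show False using assms(3,4) by linarith
  qed
  ultimately show ?thesis using assms(4) by simp
qed

lemma admissible_residue_ne_1:
  assumes "3 \<le> k" and "admissible k n"
  shows "(n - 1) mod k \<noteq> 1"
proof
  assume r: "(n - 1) mod k = 1"
  then have "0 < n" by (cases n) simp_all
  define q where "q = (n - 1) div k"
  have "n - 1 = k * q + 1" using mult_div_mod_eq[of k "n - 1"] r unfolding q_def by linarith
  then have n: "n = k * q + 2" using \<open>0 < n\<close> by linarith
  have "even (n * (n - 1))" by (cases n) simp_all
  then have "2 * (n choose 2) = n * (n - 1)" by (simp add: choose_two)
  also have "\<dots> = k * (k * q * q + 3 * q) + 2" unfolding n by (simp add: algebra_simps)
  finally have "k dvd 2"
    using assms(2) unfolding admissible_def by (metis dvd_add_right_iff dvd_mult dvd_triv_left mod_0_imp_dvd)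
  then have "k \<le> 2" by (rule dvd_imp_le) simp
  then show False using assms(1) by simp
qed

lemma mod_eq_one_mod_iff:
  fixes n k :: nat
  assumes "0 < n"
  shows "n mod k = 1 mod k \<longleftrightarrow> (n - 1) mod k = 0"
proof -
  have "n mod k = 1 mod k \<longleftrightarrow> k dvd n - 1"
    using assms by (intro mod_eq_dvd_iff_nat) simp
  then show ?thesis by (simp add: dvd_eq_mod_eq_0)
qed

lemma u_bound_eq:
  assumes "0 < k" and "0 < n"
  shows "u_bound n k = 2 * int ((n - 1) div k) - (if (n - 1) mod k = 0 then 2 else 1)"
proof -
  define q r where "q = (n - 1) div k" and "r = (n - 1) mod k"
  have n: "n - 1 = k * q + r" and "r < k" using assms(1) by (simp_all add: q_def r_def)
  show ?thesis
  proof (cases "r = 0")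
    case True
    have "int n - 1 = int (n - 1)" using assms(2) by simp
    also have "\<dots> = int k * int q" using n True by simp
    finally have "2 * (int n - 1) div int k = 2 * int q" using assms(1) by simp
    then show ?thesis using True mod_eq_one_mod_iff[OF assms(2)] unfolding u_bound_def q_def r_def by simp
  next
    case False
    have "2 \<le> n" using n False by linarith
    have "n - 2 = k * q + (r - 1)" using n False by linarith
    then have "(n - 2) div k = q" using \<open>r < k\<close> by simp
    have "(int n - 2) div int k = int (n - 2) div int k" using \<open>2 \<le> n\<close> by simp
    also have "\<dots> = int q" by (simp flip: zdiv_int add: \<open>(n - 2) div k = q\<close>)
    finally show ?thesis
      using False mod_eq_one_mod_iff[OF assms(2)] unfolding u_bound_def q_def r_def by simp
  qed
qed

lemma quotient_bounds:
  fixes a k n :: nat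
  assumes "3 \<le> k" and "3 * k + 1 < n" and "admissible k n" and "int a \<le> u_bound n k"
  defines "q \<equiv> (n - 1) div k" and "r \<equiv> (n - 1) mod k"
  shows "r \<noteq> 1" and "3 \<le> q" and "r = 0 \<Longrightarrow> 4 \<le> q"
    and "a < 2 * q" and "r = 0 \<Longrightarrow> a + 2 \<le> 2 * q"
proof -
  have n: "n - 1 = k * q + r" and "r < k" using assms(1) by (simp_all add: q_def r_def)
  show "r \<noteq> 1" using admissible_residue_ne_1[OF assms(1,3)] by (simp add: r_def)
  have "k * 3 < k * q + k" using n \<open>r < k\<close> assms(2) by linarith
  then have "k * 3 < k * (q + 1)" by (simp add: algebra_simps)
  then show "3 \<le> q" by simp
  have "k * 3 < k * q" if "r = 0" using n that assms(2) by linarith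
  then show "4 \<le> q" if "r = 0" using that by simp
  have "int a \<le> 2 * int q - (if r = 0 then 2 else 1)"
    using assms(1,2,4) u_bound_eq[of k n] by (simp add: q_def r_def)
  then show "a < 2 * q" and "r = 0 \<Longrightarrow> a + 2 \<le> 2 * q" by (auto split: if_splits)
qed

definition centred_stars :: "('a \<times> 'a set) set \<Rightarrow> 'a \<Rightarrow> ('a \<times> 'a set) set" where
  "centred_stars A x = {s \<in> A. fst s = x}"

definition leaf_stars :: "('a \<times> 'a set) set \<Rightarrow> 'a \<Rightarrow> ('a \<times> 'a set) set" where
  "leaf_stars A x = {s \<in> A. x \<in> snd s}"

definition centre_leaf_stars :: "('a \<times> 'a set) set \<Rightarrow> 'a \<Rightarrow> 'a \<Rightarrow> ('a \<times> 'a set) set" where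
  "centre_leaf_stars A v w = {s \<in> A. fst s = v \<and> w \<in> snd s}"

lemma star_edges_iff:
  "{a, b} \<in> star_edges s \<longleftrightarrow> (a = fst s \<and> b \<in> snd s) \<or> (b = fst s \<and> a \<in> snd s)"
  unfolding star_edges_def by (auto simp: doubleton_eq_iff)

lemma star_neighbours:
  assumes "fst s \<notin> snd s"
  shows "{y. {x, y} \<in> star_edges s} = (if fst s = x then snd s else if x \<in> snd s then {fst s} else {})"
  using assms by (auto simp: star_edges_iff)

locale star_design =
  fixes k n :: nat and V :: "'a set" and A :: "('a \<times> 'a set) set"
  assumes design: "partial_star_design k n V A"
begin

lemma
  shows finite_V: "finite V" and card_V: "card V = n"
    and star_centre_in_V: "s \<in> A \<Longrightarrow> fst s \<in> V"
    and star_leaves_subset_V: "s \<in> A \<Longrightarrow> snd s \<subseteq> V"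
    and star_centre_not_leaf: "s \<in> A \<Longrightarrow> fst s \<notin> snd s"
    and star_finite_leaves: "s \<in> A \<Longrightarrow> finite (snd s)"
    and star_card_leaves: "s \<in> A \<Longrightarrow> card (snd s) = k"
    and star_edges_disjoint: "s \<in> A \<Longrightarrow> t \<in> A \<Longrightarrow> s \<noteq> t \<Longrightarrow> star_edges s \<inter> star_edges t = {}"
  using design unfolding partial_star_design_def is_k_star_def by auto

lemma finite_A: "finite A"
proof (rule finite_subset)
  show "A \<subseteq> V \<times> Pow V" using star_centre_in_V star_leaves_subset_V by force
  show "finite (V \<times> Pow V)" using finite_V by simp
qed

lemma star_eqI: "s \<in> A \<Longrightarrow> t \<in> A \<Longrightarrow> e \<in> star_edges s \<Longrightarrow> e \<in> star_edges t \<Longrightarrow> s = t"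
  using star_edges_disjoint by blast

lemma leftover_iff:
  "{x, y} \<in> leftover V A \<longleftrightarrow> x \<in> V \<and> y \<in> V \<and> x \<noteq> y \<and> (\<forall>s\<in>A. {x, y} \<notin> star_edges s)"
  unfolding leftover_def complete_edges_def by (auto simp: doubleton_eq_iff)

lemma star_covered_neighbours:
  assumes "x \<in> V"
  shows "{y \<in> V. y \<noteq> x \<and> {x, y} \<notin> leftover V A}
    = (\<Union>s\<in>centred_stars A x \<union> leaf_stars A x. {y. {x, y} \<in> star_edges s})"
proof (intro equalityI subsetI)
  fix y assume "y \<in> {y \<in> V. y \<noteq> x \<and> {x, y} \<notin> leftover V A}"
  then obtain s where s: "s \<in> A" "{x, y} \<in> star_edges s" using assms by (auto simp: leftover_iff)
  then have "s \<in> centred_stars A x \<union> leaf_stars A x"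
    unfolding centred_stars_def leaf_stars_def star_edges_iff by auto
  with s show "y \<in> (\<Union>s\<in>centred_stars A x \<union> leaf_stars A x. {y. {x, y} \<in> star_edges s})" by blast
next
  fix y assume "y \<in> (\<Union>s\<in>centred_stars A x \<union> leaf_stars A x. {y. {x, y} \<in> star_edges s})"
  then obtain s where s: "s \<in> A" "{x, y} \<in> star_edges s"
    by (auto simp: centred_stars_def leaf_stars_def)
  then have "y \<in> V" "y \<noteq> x"
    using star_centre_in_V[OF s(1)] star_leaves_subset_V[OF s(1)] star_centre_not_leaf[OF s(1)]
    unfolding star_edges_iff by auto
  with s show "y \<in> {y \<in> V. y \<noteq> x \<and> {x, y} \<notin> leftover V A}"
    by (auto simp: leftover_iff)
qed

lemma card_star_covered_neighbours:
  "card (\<Union>s\<in>centred_stars A x \<union> leaf_stars A x. {y. {x, y} \<in> star_edges s})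
    = k * card (centred_stars A x) + card (leaf_stars A x)"
proof -
  let ?S = "centred_stars A x \<union> leaf_stars A x"
  let ?N = "\<lambda>s. {y. {x, y} \<in> star_edges s}"
  have finite_S: "finite ?S" using finite_A by (simp add: centred_stars_def leaf_stars_def)
  have N_eq: "?N s = (if fst s = x then snd s else if x \<in> snd s then {fst s} else {})" if "s \<in> A" for s
    by (rule star_neighbours[OF star_centre_not_leaf[OF that]])
  have "card (\<Union>s\<in>?S. ?N s) = (\<Sum>s\<in>?S. card (?N s))"
  proof (rule card_UN_disjoint[OF finite_S])
    show "\<forall>s\<in>?S. finite (?N s)"
      using N_eq star_finite_leaves by (auto simp: centred_stars_def leaf_stars_def)
    show "\<forall>s\<in>?S. \<forall>t\<in>?S. s \<noteq> t \<longrightarrow> ?N s \<inter> ?N t = {}"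
      unfolding centred_stars_def leaf_stars_def using star_eqI by blast
  qed
  also have "\<dots> = (\<Sum>s\<in>centred_stars A x. card (?N s)) + (\<Sum>s\<in>leaf_stars A x. card (?N s))"
    by (rule sum.union_disjoint)
      (use finite_S star_centre_not_leaf in \<open>auto simp: centred_stars_def leaf_stars_def\<close>)
  also have "(\<Sum>s\<in>centred_stars A x. card (?N s)) = k * card (centred_stars A x)"
    using N_eq star_card_leaves by (simp add: centred_stars_def)
  also have "(\<Sum>s\<in>leaf_stars A x. card (?N s)) = card (leaf_stars A x)"
    unfolding card_eq_sum
    by (rule sum.cong) (use N_eq star_centre_not_leaf in \<open>auto simp: leaf_stars_def\<close>)
  finally show ?thesis .
qed

lemma degree_plus_star_count:
  assumes "x \<in> V"
  shows "degree V (leftover V A) x + k * card (centred_stars A x) + card (leaf_stars A x) = n - 1"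
proof -
  have "{y \<in> V. y \<noteq> x} = V - {x}" by auto
  then have "n - 1 = card {y \<in> V. y \<noteq> x}" using assms finite_V card_V by simp
  also have "\<dots> = degree V (leftover V A) x + card {y \<in> V. y \<noteq> x \<and> {x, y} \<notin> leftover V A}"
    unfolding degree_def using finite_V
    by (subst card_Un_disjoint[symmetric]) (auto intro: arg_cong[where f = card])
  finally show ?thesis
    using star_covered_neighbours[OF assms] card_star_covered_neighbours by simp
qed

lemma star_count_bound:
  assumes "finite W"
  shows "(\<Sum>v\<in>W. card (centred_stars A v)) + card (leaf_stars A w)
    \<le> card A + (\<Sum>v\<in>W. card (centre_leaf_stars A v w))"
proof -
  define C where "C = (\<Union>v\<in>W. centred_stars A v)"
  have finite: "finite (centred_stars A v)" "finite (leaf_stars A v)" "finite (centre_leaf_stars A v w)" for v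
    using finite_A by (simp_all add: centred_stars_def leaf_stars_def centre_leaf_stars_def)
  have "card C = (\<Sum>v\<in>W. card (centred_stars A v))"
    unfolding C_def by (rule card_UN_disjoint) (use assms finite in \<open>auto simp: centred_stars_def\<close>)
  moreover have "card (C \<inter> leaf_stars A w) \<le> (\<Sum>v\<in>W. card (centre_leaf_stars A v w))"
  proof -
    have "C \<inter> leaf_stars A w = (\<Union>v\<in>W. centre_leaf_stars A v w)"
      by (auto simp: C_def centred_stars_def leaf_stars_def centre_leaf_stars_def)
    then show ?thesis using card_UN_le[OF assms] by simp
  qed
  moreover have "card (C \<union> leaf_stars A w) \<le> card A"
    by (rule card_mono[OF finite_A]) (auto simp: C_def centred_stars_def leaf_stars_def)
  moreover have "card C + card (leaf_stars A w) = card (C \<union> leaf_stars A w) + card (C \<inter> leaf_stars A w)"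
    by (rule card_Un_Int) (use assms finite in \<open>simp_all add: C_def\<close>)
  ultimately show ?thesis by linarith
qed

lemma centre_leaf_stars_self: "centre_leaf_stars A w w = {}"
  using star_centre_not_leaf by (auto simp: centre_leaf_stars_def)

lemma centre_leaf_stars_leftover: "{v, w} \<in> leftover V A \<Longrightarrow> centre_leaf_stars A v w = {}"
  by (auto simp: centre_leaf_stars_def leftover_iff star_edges_iff)

lemma card_centre_leaf_stars_le_1: "card (centre_leaf_stars A v w) + card (centre_leaf_stars A w v) \<le> 1"
proof -
  let ?E = "{s \<in> A. {v, w} \<in> star_edges s}"
  have "card ?E \<le> Suc 0"
    using finite_A star_eqI by (subst card_le_Suc0_iff_eq) (simp, blast)
  moreover have "card (centre_leaf_stars A v w \<union> centre_leaf_stars A w v) \<le> card ?E"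
    using finite_A by (intro card_mono) (auto simp: centre_leaf_stars_def star_edges_iff)
  moreover have "centre_leaf_stars A v w \<inter> centre_leaf_stars A w v = {}"
    using star_centre_not_leaf by (auto simp: centre_leaf_stars_def)
  ultimately show ?thesis
    using finite_A by (simp add: card_Un_disjoint centre_leaf_stars_def)
qed

lemma reducibleI:
  assumes "n mod k = 1 mod k" and "int (card A) = u_bound n k"
    and "v \<in> V" and "centred_stars A v \<noteq> {}" and "leaf_stars A v = {}"
  shows "reducible k n V A"
  using assms unfolding reducible_def centred_stars_def leaf_stars_def by force

lemma two_vertices_of_degree_le_k_extremal:
  assumes "3 \<le> k" and n: "n - 1 = k * q + r" and "r \<noteq> 1" and "2 \<le> q"
    and "card A < 2 * q" and "r = 0 \<Longrightarrow> card A + 2 \<le> 2 * q"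
    and "x \<in> V" and "y \<in> V" and "x \<noteq> y"
    and "degree V (leftover V A) x \<le> k" and "degree V (leftover V A) y \<le> k"
  shows "r = 0 \<and> card A + 2 = 2 * q \<and> (\<exists>v\<in>V. centred_stars A v \<noteq> {} \<and> leaf_stars A v = {})"
proof -
  define c l where "c v = card (centred_stars A v)" and "l v = card (leaf_stars A v)" for v
  have q: "k * (q - 1) + k = k * q" "2 * (q - 1) + 2 = 2 * q"
    using \<open>2 \<le> q\<close> by (auto simp: algebra_simps dest!: le_Suc_ex)
  have low: "k * (q - 1) + r \<le> k * c v + l v" if "v \<in> V" "degree V (leftover V A) v \<le> k" for v
    using degree_plus_star_count[OF that(1)] that(2) n q unfolding c_def l_def by linarith
  have weight: "2 * (q - 1) + min r 2 \<le> 2 * c v + l v" if "v \<in> V" "degree V (leftover V A) v \<le> k" for v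
    using weighted_lower_bound[OF _ low[OF that]] assms(1) by simp
  have "c x + c y + l x \<le> card A + card (centre_leaf_stars A y x)"
    using star_count_bound[of "{x, y}" x] \<open>x \<noteq> y\<close> by (simp add: c_def l_def centre_leaf_stars_self)
  moreover have "c x + c y + l y \<le> card A + card (centre_leaf_stars A x y)"
    using star_count_bound[of "{x, y}" y] \<open>x \<noteq> y\<close> by (simp add: c_def l_def centre_leaf_stars_self)
  moreover note card_centre_leaf_stars_le_1[of x y]
  ultimately have sum: "(2 * c x + l x) + (2 * c y + l y) \<le> 2 * card A + 1" by linarith
  have "r = 0"
  proof (rule ccontr)
    assume "r \<noteq> 0"
    with \<open>r \<noteq> 1\<close> have "min r 2 = 2" by simp
    then show False using sum weight[OF assms(7,10)] weight[OF assms(8,11)] assms(5) q by linarith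
  qed
  then have weight0: "2 * (q - 1) \<le> 2 * c v + l v" if "v \<in> V" "degree V (leftover V A) v \<le> k" for v
    using weight[OF that] by simp
  have card_A: "card A + 2 = 2 * q"
    using sum weight0[of x] weight0[of y] assms(6-8,10,11) \<open>r = 0\<close> q by linarith
  have "2 * c x + l x \<le> 2 * (q - 1) \<or> 2 * c y + l y \<le> 2 * (q - 1)"
    using sum card_A q by linarith
  then obtain v where v: "v \<in> V" "degree V (leftover V A) v \<le> k" "2 * c v + l v \<le> 2 * (q - 1)"
    using assms(7,8,10,11) by blast
  have "c v = q - 1 \<and> l v = 0"
    by (rule weighted_lower_bound_eq[of 2 k]) (use assms(1) low[OF v(1,2)] \<open>r = 0\<close> v(3) in auto)
  then have "centred_stars A v \<noteq> {} \<and> leaf_stars A v = {}"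
    using \<open>2 \<le> q\<close> finite_A by (auto simp: c_def l_def leaf_stars_def)
  then show ?thesis using \<open>r = 0\<close> card_A v(1) by blast
qed

lemma no_three_vertices_of_degree_lt_2k:
  assumes "3 \<le> k" and n: "n - 1 = k * q + r" and "r \<noteq> 1" and "3 \<le> q" and "r = 0 \<Longrightarrow> 4 \<le> q"
    and "card A < 2 * q" and "r = 0 \<Longrightarrow> card A + 2 \<le> 2 * q"
    and "x \<in> V" and "y \<in> V" and "z \<in> V" and xy: "{x, y} \<in> leftover V A" and "z \<noteq> x" and "z \<noteq> y"
    and "degree V (leftover V A) x < 2 * k" and "degree V (leftover V A) y < 2 * k"
    and "degree V (leftover V A) z < 2 * k"
  shows False
proof -
  define c l where "c v = card (centred_stars A v)" and "l v = card (leaf_stars A v)" for v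
  have "x \<noteq> y" using xy by (simp add: leftover_iff)
  have q: "k * (q - 2) + 2 * k = k * q" "3 * (q - 2) + 6 = 3 * q"
    using \<open>3 \<le> q\<close> by (auto simp: algebra_simps dest!: le_Suc_ex)
  have weight: "3 * (q - 2) + min (r + 1) 3 \<le> 3 * c v + l v"
    if "v \<in> V" "degree V (leftover V A) v < 2 * k" for v
  proof (rule weighted_lower_bound)
    show "3 \<le> k" by (fact assms(1))
    show "k * (q - 2) + (r + 1) \<le> k * c v + l v"
      using degree_plus_star_count[OF that(1)] that(2) n q unfolding c_def l_def by linarith
  qed
  have no_yx: "centre_leaf_stars A y x = {}" and no_xy: "centre_leaf_stars A x y = {}"
    using centre_leaf_stars_leftover xy by (simp_all add: insert_commute)
  have "c x + c y + c z + l x \<le> card A + card (centre_leaf_stars A z x)"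
    using star_count_bound[of "{x, y, z}" x] \<open>x \<noteq> y\<close> assms(12,13) no_yx
    by (simp add: c_def l_def centre_leaf_stars_self algebra_simps)
  moreover have "c x + c y + c z + l y \<le> card A + card (centre_leaf_stars A z y)"
    using star_count_bound[of "{x, y, z}" y] \<open>x \<noteq> y\<close> assms(12,13) no_xy
    by (simp add: c_def l_def centre_leaf_stars_self algebra_simps)
  moreover have "c x + c y + c z + l z \<le> card A + card (centre_leaf_stars A x z) + card (centre_leaf_stars A y z)"
    using star_count_bound[of "{x, y, z}" z] \<open>x \<noteq> y\<close> assms(12,13)
    by (simp add: c_def l_def centre_leaf_stars_self algebra_simps)
  moreover note card_centre_leaf_stars_le_1[of z x] card_centre_leaf_stars_le_1[of z y]
  ultimately have sum: "(3 * c x + l x) + (3 * c y + l y) + (3 * c z + l z) \<le> 3 * card A + 2"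
    by linarith
  show False
  proof (cases "r = 0")
    case True
    then have "min (r + 1) 3 = 1" by simp
    then show False
      using sum weight[OF assms(8,14)] weight[OF assms(9,15)] weight[OF assms(10,16)] assms(5,7) True q
      by linarith
  next
    case False
    with \<open>r \<noteq> 1\<close> have "min (r + 1) 3 = 3" by simp
    then show False
      using sum weight[OF assms(8,14)] weight[OF assms(9,15)] weight[OF assms(10,16)] assms(4,6) q
      by linarith
  qed
qed

end

theorem lemma12:
  fixes k n :: nat and V :: "'a set" and A :: "('a \<times> 'a set) set"
  assumes "k \<ge> 3" and "n > 3 * k + 1" and "admissible k n"
    and "partial_star_design k n V A" and "\<not> reducible k n V A"
    and "int (card A) \<le> u_bound n k"
  shows "card {x \<in> V. degree V (leftover V A) x \<le> k} \<le> 1 \<and>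
    (\<forall>x\<in>V. \<forall>y\<in>V. {x, y} \<in> leftover V A \<and> degree V (leftover V A) x < 2 * k
           \<and> degree V (leftover V A) y < 2 * k \<longrightarrow>
           (\<forall>z\<in>V. z \<noteq> x \<and> z \<noteq> y \<longrightarrow> degree V (leftover V A) z \<ge> 2 * k))"
proof -
  interpret star_design k n V A by (rule star_design.intro) (fact assms(4))
  define q r where "q = (n - 1) div k" and "r = (n - 1) mod k"
  have n: "n - 1 = k * q + r" using assms(1) by (simp add: q_def r_def)
  note bounds = quotient_bounds[OF assms(1,2,3,6), folded q_def r_def]
  have not_reducible: "\<not> (r = 0 \<and> card A + 2 = 2 * q \<and> (\<exists>v\<in>V. centred_stars A v \<noteq> {} \<and> leaf_stars A v = {}))"
  proof
    assume "r = 0 \<and> card A + 2 = 2 * q \<and> (\<exists>v\<in>V. centred_stars A v \<noteq> {} \<and> leaf_stars A v = {})"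
    moreover have "0 < k" "0 < n" using assms(1,2) by simp_all
    ultimately have "reducible k n V A"
      using mod_eq_one_mod_iff u_bound_eq reducibleI unfolding q_def r_def by force
    then show False using assms(5) by contradiction
  qed
  have "x = y" if "x \<in> V" "y \<in> V" "degree V (leftover V A) x \<le> k" "degree V (leftover V A) y \<le> k" for x y
    using two_vertices_of_degree_le_k_extremal[OF assms(1) n bounds(1) _ bounds(4,5) that(1,2) _ that(3,4)]
      bounds(2) not_reducible by fastforce
  then have "card {x \<in> V. degree V (leftover V A) x \<le> k} \<le> Suc 0"
    using finite_V by (subst card_le_Suc0_iff_eq) auto
  moreover have "degree V (leftover V A) z \<ge> 2 * k"
    if "x \<in> V" "y \<in> V" "z \<in> V" "{x, y} \<in> leftover V A" "z \<noteq> x" "z \<noteq> y"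
      "degree V (leftover V A) x < 2 * k" "degree V (leftover V A) y < 2 * k" for x y z
    using no_three_vertices_of_degree_lt_2k[OF assms(1) n bounds that] by (metis not_le)
  ultimately show ?thesis by auto
qed

end
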